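(* There exists a $4\times 4$ magic square $A$ whose sixteen entries are pairwise distinct strings of length $4$ over $\{0,1,2\}$ (read as decimal numbers, leading zeros allowed), with magic sum $S1=4444$, such that the rotated array $R(A)$ is also a magic square with magic sum $4444$.
   Context: A magic square of order $n$ is an $n\times n$ array of numbers in which the sums of the entries of each row, of each column and of each of the two principal diagonals all equal a common value $S1$ (the magic sum). For an $n\times n$ array $A$ whose entries are digit strings $d_1d_2\cdots d_k$ over $\{0,1,2\}$, the $180^\circ$-rotated array $R(A)$ is defined by $R(A)_{i,j}=\overline{A_{n+1-i,\,n+1-j}}$, where $\overline{d_1\cdots d_k}=d_k\cdots d_1$ is the reversed string. Strings are interpreted as decimal integers. *)

theory Defs
  imports Main
begin

text \<open>A digit string d_1 d_2 ... d_k is a list of digits (most significant first);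
  its decimal value allows leading zeros.\<close>
fun dec_val_acc :: "nat \<Rightarrow> nat list \<Rightarrow> nat" where
  "dec_val_acc a [] = a"
| "dec_val_acc a (d # ds) = dec_val_acc (10 * a + d) ds"

definition dec_val :: "nat list \<Rightarrow> nat" where
  "dec_val ds = dec_val_acc 0 ds"

definition magic_square :: "nat \<Rightarrow> (nat \<Rightarrow> nat \<Rightarrow> nat) \<Rightarrow> nat \<Rightarrow> bool" where
  "magic_square n M S \<longleftrightarrow>
     (\<forall>i<n. (\<Sum>j<n. M i j) = S) \<and>
     (\<forall>j<n. (\<Sum>i<n. M i j) = S) \<and>
     (\<Sum>i<n. M i i) = S \<and>
     (\<Sum>i<n. M i (n - 1 - i)) = S"

text \<open>180-degree rotation with reversal of each string (0-based indices):
  R(A)_{i,j} = reverse of A_{n-1-i, n-1-j}.\<close>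
definition rot180 :: "nat \<Rightarrow> (nat \<Rightarrow> nat \<Rightarrow> 'a list) \<Rightarrow> nat \<Rightarrow> nat \<Rightarrow> 'a list" where
  "rot180 n A i j = rev (A (n - 1 - i) (n - 1 - j))"

end

theory Submission
  imports Defs
begin

(* The theorem is witnessed by an explicit square. *)

definition grid :: "nat \<Rightarrow> 'a list \<Rightarrow> nat \<Rightarrow> nat \<Rightarrow> 'a" where
  "grid n xs i j = xs ! (n * i + j)"

lemma grid_entry_inj:
  assumes "distinct xs" "length xs = n * n"
    and "i < n" "j < n" "k < n" "l < n"
    and "grid n xs i j = grid n xs k l"
  shows "(i, j) = (k, l)"
proof -
  have row_major_bound: "n * a + b < n * n" if "a < n" "b < n" for a b
  proof -
    have "n * a + b < n * Suc a" using that(2) by simp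
    also have "\<dots> \<le> n * n" using that(1) by (intro mult_le_mono2) simp
    finally show ?thesis .
  qed
  have "n * i + j < n * n" "n * k + l < n * n"
    using assms(3-6) row_major_bound by simp_all
  then have pos: "n * i + j = n * k + l"
    using assms(1,2,7) by (simp add: grid_def nth_eq_iff_index_eq)
  have "i = (n * i + j) div n" "k = (n * k + l) div n"
    using assms(4,6) by simp_all
  moreover have "j = (n * i + j) mod n" "l = (n * k + l) mod n"
    using assms(4,6) by simp_all
  ultimately show ?thesis
    using pos by simp
qed

lemma all_less_4: "(\<forall>i<(4::nat). P i) \<longleftrightarrow> P 0 \<and> P 1 \<and> P 2 \<and> P 3"
  by (auto simp: numeral_eq_Suc less_Suc_eq)

lemma sum_less_4: "(\<Sum>i<(4::nat). f i) = f 0 + f 1 + f 2 + (f 3 :: nat)"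
  by (simp add: numeral_eq_Suc)

lemma magic_square_4_iff:
  "magic_square 4 M S \<longleftrightarrow>
     (\<forall>i<4. M i 0 + M i 1 + M i 2 + M i 3 = S) \<and>
     (\<forall>j<4. M 0 j + M 1 j + M 2 j + M 3 j = S) \<and>
     M 0 0 + M 1 1 + M 2 2 + M 3 3 = S \<and>
     M 0 3 + M 1 2 + M 2 1 + M 3 0 = S"
  by (simp add: magic_square_def sum_less_4)

lemma dec_val_4digits: "dec_val [a, b, c, d] = 1000 * a + 100 * b + 10 * c + d"
  by (simp add: dec_val_def)

definition witness :: "nat list list" where
  "witness =
    [[2,0,1,0], [1,1,0,2], [0,1,1,0], [1,2,2,2],
     [1,2,2,0], [0,1,2,2], [2,1,0,0], [1,0,0,2],
     [1,2,0,2], [1,1,1,0], [1,1,1,2], [1,0,2,0],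
     [0,0,1,2], [2,1,1,0], [1,1,2,2], [1,2,0,0]]"

lemma witness_distinct: "distinct witness"
  by (simp add: witness_def)

lemma witness_length: "length witness = 4 * 4"
  by (simp add: witness_def)

lemma witness_digits: "\<forall>s \<in> set witness. length s = 4 \<and> set s \<subseteq> {0, 1, 2}"
  by (simp add: witness_def)

lemma witness_entry_digits:
  assumes "i < 4" "j < 4"
  shows "length (grid 4 witness i j) = 4 \<and> set (grid 4 witness i j) \<subseteq> {0, 1, 2}"
proof -
  have "4 * i + j < length witness"
    using assms witness_length by linarith
  then show ?thesis
    using witness_digits by (simp add: grid_def)
qed

lemma witness_magic: "magic_square 4 (\<lambda>i j. dec_val (grid 4 witness i j)) 4444"
  by (simp add: magic_square_4_iff all_less_4 grid_def witness_def dec_val_4digits)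

lemma witness_rot180_magic:
  "magic_square 4 (\<lambda>i j. dec_val (rot180 4 (grid 4 witness) i j)) 4444"
  by (simp add: magic_square_4_iff all_less_4 rot180_def grid_def witness_def
      dec_val_4digits)

theorem mainTheorem2:
  shows "\<exists>A :: nat \<Rightarrow> nat \<Rightarrow> nat list.
    (\<forall>i<4. \<forall>j<4. length (A i j) = 4 \<and> set (A i j) \<subseteq> {0, 1, 2}) \<and>
    (\<forall>i<4. \<forall>j<4. \<forall>k<4. \<forall>l<4. A i j = A k l \<longrightarrow> (i, j) = (k, l)) \<and>
    magic_square 4 (\<lambda>i j. dec_val (A i j)) 4444 \<and>
    magic_square 4 (\<lambda>i j. dec_val (rot180 4 A i j)) 4444"
proof (intro exI conjI)
  let ?A = "grid 4 witness"
  show "\<forall>i<4. \<forall>j<4. length (?A i j) = 4 \<and> set (?A i j) \<subseteq> {0, 1, 2}"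
    using witness_entry_digits by blast
  show "\<forall>i<4. \<forall>j<4. \<forall>k<4. \<forall>l<4. ?A i j = ?A k l \<longrightarrow> (i, j) = (k, l)"
    using grid_entry_inj[OF witness_distinct witness_length] by blast
  show "magic_square 4 (\<lambda>i j. dec_val (?A i j)) 4444"
    by (rule witness_magic)
  show "magic_square 4 (\<lambda>i j. dec_val (rot180 4 ?A i j)) 4444"
    by (rule witness_rot180_magic)
qed

end
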